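(* Let $r \in \mathbb{Q}_{>0}$ be such that $S_r$ is atomic. Then there exists $x \in S_r$ with $\rho(x) = \rho(S_r)$ (i.e., the elasticity of $S_r$ is accepted) if and only if $r \in \mathbb{N}$ or $r < 1$.
   Context: For $q \in \mathbb{Q}_{>0}$, $\mathsf{n}(q),\mathsf{d}(q)$ are the positive coprime integers with $q = \mathsf{n}(q)/\mathsf{d}(q)$. $S_r$ is the additive submonoid of $(\mathbb{Q}_{\ge 0},+)$ generated by $\{r^n : n \in \mathbb{N}_0\}$; it is atomic exactly when $r=1$ or $\mathsf{n}(r)>1$. $\mathsf{L}(x)$ denotes the set of lengths of factorizations of $x$ into atoms. The elasticity of $x \ne 0$ is $\rho(x) = \sup \mathsf{L}(x)/\inf \mathsf{L}(x) \in \mathbb{Q}_{\ge 1} \cup \{\infty\}$, $\rho(0)=1$, and $\rho(S_r) = \sup\{\rho(x) : x \in S_r \setminus \{0\}\}$. *)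

theory Defs
  imports Complex_Main "HOL-Library.Multiset" "HOL-Library.Extended_Real"
begin

inductive_set Sr :: "rat \<Rightarrow> rat set" for r :: rat where
  zero: "0 \<in> Sr r"
| step: "x \<in> Sr r \<Longrightarrow> x + r ^ n \<in> Sr r"

definition atoms :: "rat \<Rightarrow> rat set" where
  "atoms r = {a \<in> Sr r. a \<noteq> 0 \<and> (\<forall>b\<in>Sr r. \<forall>c\<in>Sr r. a = b + c \<longrightarrow> b = 0 \<or> c = 0)}"

definition factorizations :: "rat \<Rightarrow> rat \<Rightarrow> rat multiset set" where
  "factorizations r x = {F. set_mset F \<subseteq> atoms r \<and> sum_mset F = x}"

definition lengths :: "rat \<Rightarrow> rat \<Rightarrow> nat set" where
  "lengths r x = size ` factorizations r x"

definition atomic :: "rat \<Rightarrow> bool" where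
  "atomic r \<longleftrightarrow> (\<forall>x\<in>Sr r. x \<noteq> 0 \<longrightarrow> factorizations r x \<noteq> {})"

definition elasticity :: "rat \<Rightarrow> rat \<Rightarrow> ereal" where
  "elasticity r x = (if x = 0 then 1 else
     (SUP l\<in>lengths r x. ereal (real l)) / ereal (real (Inf (lengths r x))))"

definition monoid_elasticity :: "rat \<Rightarrow> ereal" where
  "monoid_elasticity r = (SUP x\<in>Sr r - {0}. elasticity r x)"

end

theory Submission
  imports Defs
begin

text \<open>
  Every element of \<open>S\<^sub>r\<close> is a sum of powers of \<open>r\<close>, so every atom is a power of \<open>r\<close>.
  If \<open>r \<in> \<nat>\<close> the only atom is 1, all lengths of \<open>x\<close> equal \<open>x\<close>, and every elasticity is 1.
  Otherwise write \<open>r = n/d\<close> in lowest terms; atomicity forces \<open>n > 1\<close>, and then clearing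
  denominators and comparing divisibility by \<open>d\<close> (for \<open>r > 1\<close>) or by \<open>n\<close> (for \<open>r < 1\<close>)
  shows that every power of \<open>r\<close> is an atom. For \<open>r < 1\<close> the rewriting
  \<open>n r\<^sup>m = (d - n) r\<^sup>m\<^sup>+\<^sup>1 + n r\<^sup>m\<^sup>+\<^sup>1\<close> gives the element \<open>n\<close> factorizations of unbounded
  length, so \<open>\<rho>(n) = \<infinity> = \<rho>(S\<^sub>r)\<close>. For \<open>r > 1\<close> every atom is at least 1, so lengths of \<open>x\<close>
  are at most \<open>x\<close> and every \<open>\<rho>(x)\<close> is finite, while the two factorizations
  \<open>n\<^sup>k = n\<^sup>k \<cdot> 1 = d\<^sup>k \<cdot> r\<^sup>k\<close> give \<open>\<rho>(n\<^sup>k) \<ge> r\<^sup>k\<close>, so \<open>\<rho>(S\<^sub>r) = \<infinity>\<close> is not attained.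
\<close>

lemma dvd_sum_mset:
  fixes a :: "'b::comm_semiring_1"
  shows "(\<And>x. x \<in># M \<Longrightarrow> a dvd f x) \<Longrightarrow> a dvd (\<Sum>x\<in>#M. f x)"
  by (induction M) auto

lemma size_le_sum_mset:
  fixes F :: "'a::linordered_semidom multiset"
  shows "(\<And>a. a \<in># F \<Longrightarrow> 1 \<le> a) \<Longrightarrow> of_nat (size F) \<le> sum_mset F"
  by (induction F) (auto intro: add_mono)

definition pow_sum :: "rat \<Rightarrow> nat multiset \<Rightarrow> rat" where
  "pow_sum r M = (\<Sum>j\<in>#M. r ^ j)"

lemma pow_sum_simps [simp]:
  "pow_sum r {#} = 0"
  "pow_sum r (add_mset j M) = r ^ j + pow_sum r M"
  "pow_sum r (M + N) = pow_sum r M + pow_sum r N"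
  "pow_sum r (replicate_mset k j) = of_nat k * r ^ j"
  by (simp_all add: pow_sum_def)

lemma pow_sum_pos: "0 < r \<Longrightarrow> M \<noteq> {#} \<Longrightarrow> 0 < pow_sum r M"
proof (induction M)
  case (add j M)
  then show ?case by (cases "M = {#}") (auto intro: add_pos_pos)
qed simp

lemma Sr_iff_pow_sum: "x \<in> Sr r \<longleftrightarrow> (\<exists>M. x = pow_sum r M)"
proof
  show "x \<in> Sr r \<Longrightarrow> \<exists>M. x = pow_sum r M"
  proof (induction rule: Sr.induct)
    case zero
    show ?case by (intro exI[of _ "{#}"]) simp
  next
    case (step x n)
    then show ?case by (metis add.commute pow_sum_simps(2))
  qed
  show "\<exists>M. x = pow_sum r M \<Longrightarrow> x \<in> Sr r"
  proof (elim exE)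
    fix M
    show "x = pow_sum r M \<Longrightarrow> x \<in> Sr r"
    proof (induction M arbitrary: x)
      case empty
      then show ?case by (simp add: Sr.zero)
    next
      case (add j M)
      then show ?case using Sr.step[of "pow_sum r M" r j] by (simp add: add.commute)
    qed
  qed
qed

lemma pow_sum_in_Sr: "pow_sum r M \<in> Sr r"
  using Sr_iff_pow_sum by blast

lemma of_nat_in_Sr: "of_nat k \<in> Sr r"
  using pow_sum_in_Sr[of r "replicate_mset k 0"] by simp

lemma atoms_subset_powers:
  assumes "0 < r"
  shows "atoms r \<subseteq> range (power r)"
proof
  fix a assume a: "a \<in> atoms r"
  then obtain M where M: "a = pow_sum r M"
    by (auto simp: atoms_def Sr_iff_pow_sum)
  with a have "M \<noteq> {#}" by (auto simp: atoms_def)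
  then obtain j M' where "M = add_mset j M'" by (metis multiset_cases)
  with M have split: "a = pow_sum r {#j#} + pow_sum r M'" by simp
  from a have "\<forall>b\<in>Sr r. \<forall>c\<in>Sr r. a = b + c \<longrightarrow> b = 0 \<or> c = 0"
    by (simp add: atoms_def)
  with split have "pow_sum r {#j#} = 0 \<or> pow_sum r M' = 0" by (blast intro: pow_sum_in_Sr)
  with assms split show "a \<in> range (power r)" by auto
qed

lemma power_in_atomsI:
  assumes "0 < r" and "\<And>M. pow_sum r M = r ^ k \<Longrightarrow> size M \<le> 1"
  shows "r ^ k \<in> atoms r"
  unfolding atoms_def
proof (intro CollectI conjI ballI impI)
  show "r ^ k \<in> Sr r" using pow_sum_in_Sr[of r "{#k#}"] by simp
  show "r ^ k \<noteq> 0" using assms(1) by simp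
  fix b c assume "b \<in> Sr r" "c \<in> Sr r" "r ^ k = b + c"
  then obtain B C where "r ^ k = pow_sum r (B + C)" "b = pow_sum r B" "c = pow_sum r C"
    by (auto simp: Sr_iff_pow_sum)
  from this(1) have "size (B + C) \<le> 1" by (intro assms(2)) simp
  then have "size B = 0 \<or> size C = 0" by (simp only: size_union) linarith
  then show "b = 0 \<or> c = 0" using \<open>b = _\<close> \<open>c = _\<close> by auto
qed

lemma pow_sum_eq_power_summands_less:
  assumes "0 < r" "pow_sum r M = r ^ k" "2 \<le> size M" "j \<in># M"
  shows "r ^ j < r ^ k"
proof -
  obtain M' where M: "M = add_mset j M'" using assms(4) by (metis multi_member_split)
  with assms(3) have "M' \<noteq> {#}" by auto
  with assms(1) have "0 < pow_sum r M'" by (rule pow_sum_pos)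
  with assms(2) M show ?thesis by simp
qed

lemma pow_sum_cleared:
  assumes q: "quotient_of r = (n, d)" and "\<forall>j\<in>#M. j \<le> N"
  shows "of_int d ^ N * pow_sum r M = of_int (\<Sum>j\<in>#M. n ^ j * d ^ (N - j))"
  using assms(2)
proof (induction M)
  case empty
  show ?case by simp
next
  case (add j M)
  have r: "r = of_int n / of_int d" and "d \<noteq> 0"
    using quotient_of_div[OF q] quotient_of_denom_pos[OF q] by auto
  have "N = j + (N - j)" using add.prems by simp
  then have "(of_int d :: rat) ^ N = of_int d ^ j * of_int d ^ (N - j)"
    by (metis power_add)
  then have "of_int d ^ N * r ^ j = (of_int (n ^ j * d ^ (N - j)) :: rat)"
    using \<open>d \<noteq> 0\<close> by (simp add: r power_divide)
  with add show ?case by (simp add: distrib_left)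
qed

lemma pow_sum_eq_power_cleared:
  assumes q: "quotient_of r = (n, d)" and M: "pow_sum r M = r ^ k"
    and "\<forall>j\<in>#M. j \<le> N" "k \<le> N"
  shows "n ^ k * d ^ (N - k) = (\<Sum>j\<in>#M. n ^ j * d ^ (N - j))"
proof -
  have "(of_int (n ^ k * d ^ (N - k)) :: rat) = of_int (\<Sum>j\<in>#M. n ^ j * d ^ (N - j))"
    using pow_sum_cleared[OF q assms(3)] pow_sum_cleared[OF q, of "{#k#}" N] assms(4) M
    by simp
  then show ?thesis by (simp only: of_int_eq_iff)
qed

text \<open>For \<open>r > 1\<close> all exponents are below \<open>k\<close>; clearing denominators, \<open>d\<close> divides \<open>n\<^sup>k\<close>.\<close>
lemma pow_sum_eq_power_size_le_1_of_gt_1: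
  assumes q: "quotient_of r = (n, d)" and d: "1 < d" and r: "1 < r"
    and M: "pow_sum r M = r ^ k"
  shows "size M \<le> 1"
proof (rule ccontr)
  assume "\<not> size M \<le> 1"
  then have exps: "j < k" if "j \<in># M" for j
    using pow_sum_eq_power_summands_less[OF _ M _ that] r
    by (simp add: power_less_imp_less_exp)
  then have "d dvd (\<Sum>j\<in>#M. n ^ j * d ^ (k - j))"
    by (intro dvd_sum_mset dvd_mult) (simp add: dvd_power)
  with pow_sum_eq_power_cleared[OF q M, of k] exps have "d dvd n ^ k"
    by (simp add: less_imp_le)
  moreover have "coprime (n ^ k) d" using quotient_of_coprime[OF q] by simp
  ultimately show False using coprime_common_divisor_int[of "n ^ k" d d] d by simp
qed

text \<open>For \<open>r < 1\<close> all exponents exceed \<open>k\<close>; clearing denominators, \<open>n\<close> divides a power of \<open>d\<close>.\<close>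
lemma pow_sum_eq_power_size_le_1_of_lt_1:
  assumes q: "quotient_of r = (n, d)" and n: "1 < n" and r: "0 < r" "r < 1"
    and M: "pow_sum r M = r ^ k"
  shows "size M \<le> 1"
proof (rule ccontr)
  assume "\<not> size M \<le> 1"
  then have exps: "k < j" if "j \<in># M" for j
    using pow_sum_eq_power_summands_less[OF r(1) M _ that] r
    by (simp add: power_strict_decreasing_iff)
  define N where "N = Max (set_mset M)"
  have le: "\<forall>j\<in>#M. j \<le> N" by (simp add: N_def)
  from \<open>\<not> size M \<le> 1\<close> obtain j where "j \<in># M" by (metis multiset_nonemptyE size_empty zero_le)
  with le exps have "k < N" by (meson order_less_le_trans)
  have "n ^ Suc k dvd (\<Sum>j\<in>#M. n ^ j * d ^ (N - j))"
    by (intro dvd_sum_mset dvd_mult2 le_imp_power_dvd) (simp add: Suc_le_eq exps)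
  with pow_sum_eq_power_cleared[OF q M le] \<open>k < N\<close> have "n ^ k * n dvd n ^ k * d ^ (N - k)"
    by (simp add: mult.commute)
  with n have "n dvd d ^ (N - k)" by (simp only: dvd_mult_cancel_left) simp
  moreover have "coprime n (d ^ (N - k))" using quotient_of_coprime[OF q] by simp
  ultimately show False using coprime_common_divisor_int[of n "d ^ (N - k)" n] n by simp
qed

lemma powers_in_atoms:
  assumes q: "quotient_of r = (n, d)" and n: "1 < n" and d: "1 < d"
  shows "r ^ k \<in> atoms r"
proof -
  have r: "r = of_int n / of_int d" and cop: "coprime n d"
    using quotient_of_div[OF q] quotient_of_coprime[OF q] by auto
  have "0 < r" using n d by (simp add: r)
  have "n \<noteq> d" using cop n by auto
  with d have "r \<noteq> 1" by (simp add: r)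
  then consider "1 < r" | "r < 1" by linarith
  then show ?thesis
  proof cases
    case 1
    show ?thesis
      by (intro power_in_atomsI \<open>0 < r\<close> pow_sum_eq_power_size_le_1_of_gt_1[OF q d 1])
  next
    case 2
    show ?thesis
      by (intro power_in_atomsI \<open>0 < r\<close> pow_sum_eq_power_size_le_1_of_lt_1[OF q n \<open>0 < r\<close> 2])
  qed
qed

text \<open>For \<open>r = 1/q\<close> every power splits as \<open>r\<^sup>j = r\<^sup>j\<^sup>+\<^sup>1 + (q - 1) r\<^sup>j\<^sup>+\<^sup>1\<close>.\<close>
lemma atoms_empty_of_reciprocal:
  assumes rq: "r * of_nat q = 1" and q: "2 \<le> q"
  shows "atoms r = {}"
proof (rule ccontr)
  assume "atoms r \<noteq> {}"
  then obtain a where a: "a \<in> atoms r" by blast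
  have "0 < r * of_nat q" using rq by simp
  then have "0 < r" by (simp add: zero_less_mult_iff)
  with a atoms_subset_powers obtain j where j: "a = r ^ j" by blast
  have "r ^ j = pow_sum r {#Suc j#} + pow_sum r (replicate_mset (q - 1) (Suc j))"
    using rq q by (simp add: of_nat_diff algebra_simps)
  moreover have "pow_sum r {#Suc j#} \<noteq> 0" "pow_sum r (replicate_mset (q - 1) (Suc j)) \<noteq> 0"
    using \<open>0 < r\<close> q by auto
  ultimately show False using a j pow_sum_in_Sr unfolding atoms_def by blast
qed

lemma numerator_denominator_gt_1:
  assumes "atomic r" "0 < r" "r \<notin> \<nat>" and q: "quotient_of r = (n, d)"
  shows "1 < n \<and> 1 < d"
proof
  have r: "r = of_int n / of_int d" and "0 < d"
    using quotient_of_div[OF q] quotient_of_denom_pos[OF q] by auto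
  with assms(2) have "0 < n" by (simp add: zero_less_divide_iff)
  show "1 < d"
  proof (rule ccontr)
    assume "\<not> 1 < d"
    with \<open>0 < d\<close> have "d = 1" by simp
    with \<open>0 < n\<close> have "r = of_nat (nat n)" by (simp add: r)
    with assms(3) show False by simp
  qed
  show "1 < n"
  proof (rule ccontr)
    assume "\<not> 1 < n"
    with \<open>0 < n\<close> have "r * of_nat (nat d) = 1" using \<open>0 < d\<close> by (simp add: r)
    with \<open>1 < d\<close> have "atoms r = {}" using atoms_empty_of_reciprocal[of r "nat d"] by simp
    moreover have "factorizations r 1 \<noteq> {}"
      using assms(1) of_nat_in_Sr[of 1 r] by (simp add: atomic_def)
    ultimately show False by (auto simp: factorizations_def)
  qed
qed

lemma lengths_pos: "x \<noteq> 0 \<Longrightarrow> l \<in> lengths r x \<Longrightarrow> 0 < l"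
  by (auto simp: lengths_def factorizations_def intro!: gr0I)

lemma lengths_nonempty: "atomic r \<Longrightarrow> x \<in> Sr r \<Longrightarrow> x \<noteq> 0 \<Longrightarrow> lengths r x \<noteq> {}"
  by (simp add: atomic_def lengths_def)

lemma size_in_lengths:
  assumes "\<And>j. r ^ j \<in> atoms r"
  shows "size M \<in> lengths r (pow_sum r M)"
proof -
  have "image_mset (power r) M \<in> factorizations r (pow_sum r M)"
    using assms by (auto simp: factorizations_def pow_sum_def)
  then show ?thesis unfolding lengths_def by (metis image_eqI size_image_mset)
qed

lemma elasticity_ge_length_ratio:
  assumes "x \<noteq> 0" "l \<in> lengths r x" "m \<in> lengths r x"
  shows "ereal (real l / real m) \<le> elasticity r x"
proof -
  define I where "I = Inf (lengths r x)"
  have "I \<in> lengths r x" unfolding I_def using assms(3) by (auto intro: Inf_nat_def1)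
  then have "0 < I" by (rule lengths_pos[OF assms(1)])
  have "I \<le> m" unfolding I_def Inf_nat_def using assms(3) by (rule Least_le)
  have "ereal (real l / real m) \<le> ereal (real l / real I)"
    using \<open>0 < I\<close> \<open>I \<le> m\<close> by (simp add: frac_le)
  also have "\<dots> = ereal (real l) / ereal (real I)" using \<open>0 < I\<close> by simp
  also have "\<dots> \<le> (SUP l\<in>lengths r x. ereal (real l)) / ereal (real I)"
    using assms(2) \<open>0 < I\<close> by (intro ereal_divide_right_mono SUP_upper) auto
  also have "\<dots> = elasticity r x" using assms(1) by (simp add: elasticity_def I_def)
  finally show ?thesis .
qed

lemma elasticity_le_monoid_elasticity:
  "x \<in> Sr r \<Longrightarrow> x \<noteq> 0 \<Longrightarrow> elasticity r x \<le> monoid_elasticity r"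
  unfolding monoid_elasticity_def by (intro SUP_upper) auto

lemma elasticity_eq_infinity_if_lengths_unbounded:
  assumes "x \<noteq> 0" "m \<in> lengths r x" and unbounded: "\<And>k. \<exists>l\<in>lengths r x. k \<le> l"
  shows "elasticity r x = \<infinity>"
proof (rule ereal_top)
  fix B :: real
  obtain l where l: "l \<in> lengths r x" "nat \<lceil>B * real m\<rceil> \<le> l" using unbounded by blast
  have "0 < m" using assms(1,2) by (rule lengths_pos)
  with l(2) have "B \<le> real l / real m" by (simp add: le_divide_eq)
  then have "ereal B \<le> ereal (real l / real m)" by simp
  also have "\<dots> \<le> elasticity r x" using assms(1) l(1) assms(2) by (rule elasticity_ge_length_ratio)
  finally show "ereal B \<le> elasticity r x" .
qed

lemma elasticity_finite_if_lengths_bounded: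
  assumes "x \<noteq> 0" "lengths r x \<noteq> {}" and bounded: "\<And>l. l \<in> lengths r x \<Longrightarrow> real l \<le> B"
  shows "elasticity r x \<noteq> \<infinity>"
proof -
  define S where "S = (SUP l\<in>lengths r x. ereal (real l))"
  define I where "I = Inf (lengths r x)"
  have "I \<in> lengths r x" unfolding I_def using assms(2) by (rule Inf_nat_def1)
  then have "0 < I" by (rule lengths_pos[OF assms(1)])
  have "S \<le> ereal B" unfolding S_def using bounded by (intro SUP_least) simp
  then have "S \<noteq> \<infinity>" by auto
  moreover have "elasticity r x = S / ereal (real I)"
    using assms(1) by (simp add: elasticity_def S_def I_def)
  ultimately show ?thesis using \<open>0 < I\<close> by (cases S) auto
qed

lemma elasticity_eq_1_if_lengths_singleton:
  "x \<noteq> 0 \<Longrightarrow> lengths r x = {l} \<Longrightarrow> elasticity r x = 1"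
  using lengths_pos[of x l r] by (simp add: elasticity_def)

subsection \<open>Integral \<open>r\<close>\<close>

lemma Sr_subset_Nats:
  assumes "r \<in> \<nat>"
  shows "Sr r \<subseteq> \<nat>"
proof
  fix x assume "x \<in> Sr r"
  then show "x \<in> \<nat>"
  proof (induction rule: Sr.induct)
    case zero
    show ?case by simp
  next
    case (step x n)
    from assms obtain m where "r = of_nat m" by (auto elim: Nats_cases)
    then have "r ^ n \<in> \<nat>" by (metis of_nat_in_Nats of_nat_power)
    with step.IH show ?case by (rule Nats_add)
  qed
qed

lemma atoms_subset_1_of_Nats:
  assumes "r \<in> \<nat>"
  shows "atoms r \<subseteq> {1}"
proof
  fix a assume a: "a \<in> atoms r"
  then have "a \<in> \<nat>" "a \<noteq> 0" using Sr_subset_Nats[OF assms] by (auto simp: atoms_def)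
  then obtain k where k: "a = of_nat k" "0 < k" by (auto elim: Nats_cases)
  have "a = of_nat 1 + of_nat (k - 1)" using k by (simp add: of_nat_diff)
  moreover from a have "\<forall>b\<in>Sr r. \<forall>c\<in>Sr r. a = b + c \<longrightarrow> b = 0 \<or> c = 0"
    by (simp add: atoms_def)
  ultimately have "(of_nat 1 :: rat) = 0 \<or> (of_nat (k - 1) :: rat) = 0"
    using of_nat_in_Sr by blast
  then have "k - 1 = 0" by simp
  with k show "a \<in> {1}" by simp
qed

lemma lengths_of_Nats:
  assumes "r \<in> \<nat>" "l \<in> lengths r x"
  shows "of_nat l = x"
proof -
  from assms(2) obtain F where F: "set_mset F \<subseteq> atoms r" "sum_mset F = x" "l = size F"
    by (auto simp: lengths_def factorizations_def)
  with atoms_subset_1_of_Nats[OF assms(1)] have "set_mset F \<subseteq> {1}" by blast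
  then have "F = replicate_mset l 1" unfolding F(3) by (rule set_mset_subset_singletonD)
  with F(2) show ?thesis by simp
qed

lemma monoid_elasticity_of_Nats:
  assumes "r \<in> \<nat>" "atomic r"
  shows "monoid_elasticity r = 1"
proof -
  have one: "elasticity r x = 1" if x: "x \<in> Sr r - {0}" for x
  proof -
    from x obtain l where l: "l \<in> lengths r x" using lengths_nonempty[OF assms(2)] by blast
    have "l' = l" if "l' \<in> lengths r x" for l'
      using lengths_of_Nats[OF assms(1) that] lengths_of_Nats[OF assms(1) l] by simp
    with l have "lengths r x = {l}" by blast
    with x show ?thesis by (intro elasticity_eq_1_if_lengths_singleton) auto
  qed
  have "monoid_elasticity r = (SUP x\<in>Sr r - {0}. 1)"
    unfolding monoid_elasticity_def by (rule SUP_cong) (simp_all add: one)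
  also have "\<dots> = 1" using of_nat_in_Sr[of 1 r] by (intro SUP_const) force
  finally show ?thesis .
qed

subsection \<open>Non-integral \<open>r < 1\<close>\<close>

text \<open>Replacing \<open>p\<close> copies of \<open>r\<^sup>m\<close> by \<open>q\<close> copies of \<open>r\<^sup>m\<^sup>+\<^sup>1\<close> keeps the value and adds \<open>q - p\<close> summands.\<close>
lemma long_pow_sum_representations:
  assumes rqp: "r * of_nat q = of_nat p" and "p < q"
  shows "\<exists>M. pow_sum r M = of_nat p \<and> m \<le> size M"
proof -
  have "\<exists>M. pow_sum r (M + replicate_mset p m) = of_nat p \<and> m \<le> size M"
  proof (induction m)
    case 0
    show ?case by (intro exI[of _ "{#}"]) simp
  next
    case (Suc m)
    then obtain M where M: "pow_sum r (M + replicate_mset p m) = of_nat p" "m \<le> size M" by blast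
    define M' where "M' = M + replicate_mset (q - p) (Suc m)"
    have "of_nat q * r ^ Suc m = of_nat p * r ^ m"
      unfolding power_Suc rqp[symmetric] by (simp only: ac_simps)
    then have "pow_sum r (M' + replicate_mset p (Suc m)) = pow_sum r (M + replicate_mset p m)"
      using \<open>p < q\<close> by (simp add: M'_def of_nat_diff algebra_simps)
    moreover have "Suc m \<le> size M'" using M(2) \<open>p < q\<close> by (simp add: M'_def)
    ultimately show ?case using M(1) by (intro exI[of _ M']) simp
  qed
  then obtain M where "pow_sum r (M + replicate_mset p m) = of_nat p" "m \<le> size M" by blast
  then show ?thesis by (intro exI[of _ "M + replicate_mset p m"]) simp
qed

lemma elasticity_infinite_of_lt_1:
  assumes atoms: "\<And>j. r ^ j \<in> atoms r" and rqp: "r * of_nat q = of_nat p"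
    and "0 < p" "r < 1"
  shows "elasticity r (of_nat p) = \<infinity>"
proof -
  have "0 < q" using rqp \<open>0 < p\<close> by (cases q) auto
  have "(of_nat p :: rat) = r * of_nat q" by (simp add: rqp)
  also have "\<dots> < of_nat q" using \<open>r < 1\<close> \<open>0 < q\<close> by simp
  finally have "p < q" by simp
  have long: "\<exists>l\<in>lengths r (of_nat p). m \<le> l" for m
  proof -
    obtain M where "pow_sum r M = of_nat p" "m \<le> size M"
      using long_pow_sum_representations[OF rqp \<open>p < q\<close>] by blast
    then show ?thesis using size_in_lengths[OF atoms, of M] by auto
  qed
  from long[of 0] obtain l where "l \<in> lengths r (of_nat p)" by blast
  with \<open>0 < p\<close> long show ?thesis by (intro elasticity_eq_infinity_if_lengths_unbounded) auto
qed

subsection \<open>Non-integral \<open>r > 1\<close>\<close>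

lemma elasticity_finite_of_ge_1:
  assumes "1 \<le> r" "atomic r" "x \<in> Sr r"
  shows "elasticity r x \<noteq> \<infinity>"
proof (cases "x = 0")
  case True
  then show ?thesis by (simp add: elasticity_def)
next
  case False
  have "real l \<le> real_of_rat x" if "l \<in> lengths r x" for l
  proof -
    from that obtain F where F: "set_mset F \<subseteq> atoms r" "sum_mset F = x" "l = size F"
      by (auto simp: lengths_def factorizations_def)
    have "1 \<le> a" if "a \<in># F" for a
      using F(1) that atoms_subset_powers[of r] assms(1) by (auto simp: one_le_power)
    then have "of_nat (size F) \<le> sum_mset F" by (rule size_le_sum_mset)
    then have "of_rat (of_nat l) \<le> (of_rat x :: real)" using F(2,3) by (simp only: of_rat_less_eq)
    then show ?thesis by simp
  qed
  with False lengths_nonempty[OF assms(2,3)] show ?thesis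
    by (intro elasticity_finite_if_lengths_bounded) auto
qed

text \<open>\<open>p\<^sup>k\<close> is both the sum of \<open>p\<^sup>k\<close> ones and of \<open>q\<^sup>k\<close> copies of \<open>r\<^sup>k\<close>.\<close>
lemma monoid_elasticity_infinite_of_gt_1:
  assumes atoms: "\<And>j. r ^ j \<in> atoms r" and rqp: "r * of_nat q = of_nat p"
    and "0 < q" "1 < r"
  shows "monoid_elasticity r = \<infinity>"
proof (rule ereal_top)
  fix B :: real
  have "1 < real_of_rat r" using of_rat_less[of 1 r] \<open>1 < r\<close> by simp
  then obtain k where k: "B < real_of_rat r ^ k" using real_arch_pow by blast
  have "0 < p" using rqp \<open>0 < q\<close> \<open>1 < r\<close> by (cases p) auto
  define x where "x = (of_nat (p ^ k) :: rat)"
  have "x \<in> Sr r" unfolding x_def by (rule of_nat_in_Sr)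
  have "x \<noteq> 0" using \<open>0 < p\<close> by (simp add: x_def)
  have "pow_sum r (replicate_mset (p ^ k) 0) = x" "pow_sum r (replicate_mset (q ^ k) k) = x"
    by (simp_all add: x_def mult.commute flip: rqp power_mult_distrib)
  then have lengths: "p ^ k \<in> lengths r x" "q ^ k \<in> lengths r x"
    using size_in_lengths[OF atoms] by (metis size_replicate_mset)+
  have "r = of_nat p / of_nat q" using rqp \<open>0 < q\<close> by (simp add: eq_divide_eq)
  then have "real_of_rat r = real p / real q" by (simp add: of_rat_divide)
  then have "ereal B \<le> ereal (real (p ^ k) / real (q ^ k))"
    using k by (simp add: power_divide)
  also have "\<dots> \<le> elasticity r x" using \<open>x \<noteq> 0\<close> lengths by (rule elasticity_ge_length_ratio)
  also have "\<dots> \<le> monoid_elasticity r" using \<open>x \<in> Sr r\<close> \<open>x \<noteq> 0\<close> by (rule elasticity_le_monoid_elasticity)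
  finally show "ereal B \<le> monoid_elasticity r" .
qed

theorem proposition4p3:
  fixes r :: rat
  assumes "r > 0" and "atomic r"
  shows "(\<exists>x\<in>Sr r. elasticity r x = monoid_elasticity r) \<longleftrightarrow> (r \<in> \<nat> \<or> r < 1)"
proof (cases "r \<in> \<nat>")
  case True
  then have "elasticity r 0 = monoid_elasticity r"
    using monoid_elasticity_of_Nats assms(2) by (simp add: elasticity_def)
  with True show ?thesis using Sr.zero by blast
next
  case False
  obtain n d where q: "quotient_of r = (n, d)" by fastforce
  with assms False have "1 < n" "1 < d" using numerator_denominator_gt_1 by blast+
  with q have atoms: "\<And>j. r ^ j \<in> atoms r" by (rule powers_in_atoms)
  have rqp: "r * of_nat (nat d) = of_nat (nat n)"
    using quotient_of_div[OF q] \<open>1 < n\<close> \<open>1 < d\<close> by simp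
  have "r \<noteq> 1" using False by auto
  then consider "r < 1" | "1 < r" by linarith
  then show ?thesis
  proof cases
    case 1
    with \<open>1 < n\<close> have "elasticity r (of_nat (nat n)) = \<infinity>"
      by (intro elasticity_infinite_of_lt_1[OF atoms rqp]) auto
    moreover from this have "monoid_elasticity r = \<infinity>"
      using elasticity_le_monoid_elasticity[OF of_nat_in_Sr, of "nat n" r] \<open>1 < n\<close> by simp
    ultimately show ?thesis using 1 of_nat_in_Sr by metis
  next
    case 2
    with \<open>1 < d\<close> have "monoid_elasticity r = \<infinity>"
      by (intro monoid_elasticity_infinite_of_gt_1[OF atoms rqp]) auto
    with 2 assms(2) have "\<forall>x\<in>Sr r. elasticity r x \<noteq> monoid_elasticity r"
      using elasticity_finite_of_ge_1 by simp
    with False 2 show ?thesis by auto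
  qed
qed

end
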